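(* Let $T>0$ and let $\alpha,\beta:\mathbb{R}\to\mathbb{R}$ be continuous $T$-periodic functions such that $\alpha=0$ on $[\tfrac T2,T]$, $\beta=0$ on $[0,\tfrac T2]$, $\alpha>0$ on $(0,\tfrac T2)$, $\beta>0$ on $(\tfrac T2,T)$, and $\int_0^T\alpha=\int_0^T\beta=:A>0$. Consider the system $u'=\alpha(t)u(1-v)$, $v'=\beta(t)v(-1+u)$. Let $x>0$, let $(u,v)$ be the solution with $u(0)=v(0)=x$, and write $u_k:=u(kT)$, $v_k:=v(kT)$ for $k\ge0$. Fix $n\ge2$ and suppose \[ u_0+u_1+\cdots+u_{n-1}=n,\qquad v_0+v_1+\cdots+v_{n-1}=n . \] Then $u_h=v_{n-h}$ for all $h\in\{1,\ldots,n-1\}$.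
   Context: For $n\ge1$ the $nT$-Poincaré map is $\mathcal{P}_n(u_0,v_0)=(u(nT),v(nT))$ where $(u,v)$ solves the system with $(u(0),v(0))=(u_0,v_0)$. One has $u_n=u_0e^{(n-v_0-\cdots-v_{n-1})A}$ and $v_n=v_0e^{(u_1+\cdots+u_n-n)A}$, so the displayed sum conditions are equivalent to $nT$-periodicity of the solution. *)

theory Defs
  imports "HOL-Analysis.Analysis"
begin

end

theory Submission imports Defs begin

text \<open>While \<open>\<alpha>\<close> is active, \<open>\<beta>\<close> vanishes and \<open>v\<close> is frozen, so \<open>u\<close> solves a linear equation;
  in the second half of each period the roles are swapped. Hence the period map is the explicit map
  \<open>(u, v) \<mapsto> (u', v e\<^bsup>(u'-1)A\<^esup>)\<close> with \<open>u' = u e\<^bsup>(1-v)A\<^esup>\<close>. Multiplying out, the sum conditions say that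
  the orbit of \<open>(x, x)\<close> returns after \<open>n\<close> steps. The period map is reversible with respect to the swap
  \<open>(u, v) \<mapsto> (v, u)\<close>, so the orbit read backwards is the swapped orbit.\<close>

lemma has_real_derivative_zero_Icc_const:
  fixes f :: "real \<Rightarrow> real"
  assumes "\<And>t. t \<in> {a..b} \<Longrightarrow> (f has_real_derivative 0) (at t within {a..b})"
    and "t \<in> {a..b}"
  shows "f t = f a"
proof -
  obtain c where "\<forall>s\<in>{a..b}. f s = c"
    using has_field_derivative_zero_constant[of "{a..b}" f] assms(1) by auto
  then show ?thesis using assms(2) by auto
qed

lemma linear_ode_solution_Icc:
  fixes f g :: "real \<Rightarrow> real"
  assumes "a \<le> b" and g_cont: "continuous_on {a..b} g"
    and f_deriv: "\<And>t. t \<in> {a..b} \<Longrightarrow> (f has_real_derivative g t * f t * c) (at t within {a..b})"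
  shows "f b = f a * exp (c * integral {a..b} g)"
proof -
  define G where "G t = integral {a..t} g" for t
  have G_deriv: "(G has_real_derivative g t) (at t within {a..b})" if "t \<in> {a..b}" for t
    using integral_has_vector_derivative[OF g_cont that] unfolding G_def
    by (simp add: has_real_derivative_iff_has_vector_derivative)
  define h where "h t = f t * exp (- c * G t)" for t
  have "(h has_real_derivative 0) (at t within {a..b})" if "t \<in> {a..b}" for t
  proof -
    have "((\<lambda>t. exp (- c * G t)) has_real_derivative exp (- c * G t) * (- c * g t)) (at t within {a..b})"
      using DERIV_chain2[OF DERIV_exp DERIV_cmult[OF G_deriv[OF that], of "-c"]] by simp
    from DERIV_mult[OF f_deriv[OF that] this] show ?thesis
      unfolding h_def by (simp add: algebra_simps)
  qed
  then have "h b = h a"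
    using has_real_derivative_zero_Icc_const[of a b h b] \<open>a \<le> b\<close> by auto
  then have "f b * exp (- c * G b) = f a"
    by (simp add: h_def G_def)
  then show ?thesis
    by (simp add: G_def exp_minus field_simps)
qed

lemma periodic_nat_shift:
  assumes "\<And>t. f (t + p) = f t"
  shows "f (t + real k * p) = f t"
proof (induction k arbitrary: t)
  case (Suc k)
  then show ?case using assms[of "t + real k * p"] by (simp add: algebra_simps)
qed simp

lemma integral_periodic_shift:
  fixes f :: "real \<Rightarrow> real"
  assumes "\<And>t. f (t + p) = f t"
  shows "integral {a + p..b + p} f = integral {a..b} f"
proof -
  have "f \<circ> (+) p = f"
    using assms by (simp add: fun_eq_iff add.commute)
  with integral_shift_Icc_real[of a b f p] show ?thesis
    by (simp add: add.commute)
qed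

definition poincare_step :: "real \<Rightarrow> real \<times> real \<Rightarrow> real \<times> real" where
  "poincare_step A = (\<lambda>(u, v). let u' = u * exp ((1 - v) * A) in (u', v * exp ((u' - 1) * A)))"

lemma poincare_step_reversible:
  assumes "poincare_step A (a, b) = (c, d)"
  shows "poincare_step A (d, c) = (b, a)"
proof -
  have c: "c = a * exp ((1 - b) * A)" and d: "d = b * exp ((c - 1) * A)"
    using assms by (auto simp: poincare_step_def Let_def)
  have "d * exp ((1 - c) * A) = b"
    by (simp add: d mult.assoc flip: exp_add) (simp add: algebra_simps)
  moreover have "c * exp ((b - 1) * A) = a"
    by (simp add: c mult.assoc flip: exp_add) (simp add: algebra_simps)
  ultimately show ?thesis
    by (simp add: poincare_step_def Let_def)
qed

locale poincare_orbit =
  fixes A :: real and U V :: "nat \<Rightarrow> real"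
  assumes orbit_step: "(U (Suc k), V (Suc k)) = poincare_step A (U k, V k)"
begin

lemma U_Suc: "U (Suc k) = U k * exp ((1 - V k) * A)"
  and V_Suc: "V (Suc k) = V k * exp ((U (Suc k) - 1) * A)"
  using orbit_step[of k] by (auto simp: poincare_step_def Let_def)

lemma U_closed_form: "U j = U 0 * exp (A * (real j - (\<Sum>k<j. V k)))"
  by (induction j) (simp_all add: U_Suc mult_exp_exp algebra_simps)

lemma V_closed_form: "V j = V 0 * exp (A * ((\<Sum>k<j. U (Suc k)) - real j))"
  by (induction j) (simp_all add: V_Suc mult_exp_exp algebra_simps)

lemma returns_if_sums_eq:
  assumes "(\<Sum>k<n. U k) = real n" and "(\<Sum>k<n. V k) = real n"
  shows "U n = U 0" and "V n = V 0"
proof -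
  show U_n: "U n = U 0"
    using U_closed_form[of n] assms(2) by simp
  have "(\<Sum>k<n. U (Suc k)) = (\<Sum>k<Suc n. U k) - U 0"
    by (subst sum.lessThan_Suc_shift) simp
  also have "\<dots> = real n"
    using assms(1) U_n by simp
  finally show "V n = V 0"
    using V_closed_form[of n] by simp
qed

lemma reversed_orbit_swapped:
  assumes "(U n, V n) = (V 0, U 0)" and "h \<le> n"
  shows "(U (n - h), V (n - h)) = (V h, U h)"
  using \<open>h \<le> n\<close>
proof (induction h)
  case (Suc h)
  then obtain m where m: "n - h = Suc m" "n - Suc h = m"
    by (metis Suc_diff_Suc Suc_le_lessD diff_Suc_1)
  have "(U (Suc m), V (Suc m)) = (V h, U h)"
    using Suc m by simp
  then have "poincare_step A (U m, V m) = (V h, U h)"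
    by (simp only: orbit_step)
  then have "poincare_step A (U h, V h) = (V m, U m)"
    by (rule poincare_step_reversible)
  then show ?case
    by (simp only: m flip: orbit_step) simp
qed (use assms in simp)

end

locale seasonal_predator_prey =
  fixes T A :: real and \<alpha> \<beta> u v :: "real \<Rightarrow> real"
  assumes T_pos: "T > 0"
    and alpha_cont: "continuous_on UNIV \<alpha>" and beta_cont: "continuous_on UNIV \<beta>"
    and alpha_periodic: "\<alpha> (t + T) = \<alpha> t" and beta_periodic: "\<beta> (t + T) = \<beta> t"
    and alpha_vanishes: "t \<in> {T/2..T} \<Longrightarrow> \<alpha> t = 0"
    and beta_vanishes: "t \<in> {0..T/2} \<Longrightarrow> \<beta> t = 0"
    and integral_alpha: "integral {0..T} \<alpha> = A" and integral_beta: "integral {0..T} \<beta> = A"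
    and ode_u: "t \<ge> 0 \<Longrightarrow> (u has_real_derivative \<alpha> t * u t * (1 - v t)) (at t within {0..})"
    and ode_v: "t \<ge> 0 \<Longrightarrow> (v has_real_derivative \<beta> t * v t * (u t - 1)) (at t within {0..})"
begin

lemma integral_alpha_first_half: "integral {0..T/2} \<alpha> = A"
proof -
  have "integral {T/2..T} \<alpha> = 0"
    using integral_cong[of "{T/2..T}" \<alpha> "\<lambda>_. 0"] alpha_vanishes by simp
  moreover have "\<alpha> integrable_on {0..T}"
    using alpha_cont continuous_on_subset integrable_continuous_real by blast
  ultimately show ?thesis
    using Henstock_Kurzweil_Integration.integral_combine[of 0 "T/2" T \<alpha>] T_pos integral_alpha by simp
qed

lemma integral_beta_second_half: "integral {T/2..T} \<beta> = A"
proof -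
  have "integral {0..T/2} \<beta> = 0"
    using integral_cong[of "{0..T/2}" \<beta> "\<lambda>_. 0"] beta_vanishes by simp
  moreover have "\<beta> integrable_on {0..T}"
    using beta_cont continuous_on_subset integrable_continuous_real by blast
  ultimately show ?thesis
    using Henstock_Kurzweil_Integration.integral_combine[of 0 "T/2" T \<beta>] T_pos integral_beta by simp
qed

lemma ode_u_Icc:
  assumes "0 \<le> a" and "t \<in> {a..b}"
  shows "(u has_real_derivative \<alpha> t * u t * (1 - v t)) (at t within {a..b})"
  using has_field_derivative_subset[OF ode_u, of t "{a..b}"] assms by auto

lemma ode_v_Icc:
  assumes "0 \<le> a" and "t \<in> {a..b}"
  shows "(v has_real_derivative \<beta> t * v t * (u t - 1)) (at t within {a..b})"
  using has_field_derivative_subset[OF ode_v, of t "{a..b}"] assms by auto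

lemma alpha_shift: "\<alpha> (t + real k * T) = \<alpha> t"
  and beta_shift: "\<beta> (t + real k * T) = \<beta> t"
  using periodic_nat_shift alpha_periodic beta_periodic by blast+

lemma v_frozen_first_half:
  assumes "t \<in> {real k * T..real k * T + T/2}"
  shows "v t = v (real k * T)"
proof (rule has_real_derivative_zero_Icc_const[OF _ assms])
  fix s assume s: "s \<in> {real k * T..real k * T + T/2}"
  then have "\<beta> s = 0"
    using beta_shift[of "s - real k * T" k] beta_vanishes[of "s - real k * T"] by simp
  moreover have "(v has_real_derivative \<beta> s * v s * (u s - 1)) (at s within {real k * T..real k * T + T/2})"
    using ode_v_Icc[OF _ s] T_pos by simp
  ultimately show "(v has_real_derivative 0) (at s within {real k * T..real k * T + T/2})"
    by simp
qed

lemma u_frozen_second_half: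
  assumes "t \<in> {real k * T + T/2..real k * T + T}"
  shows "u t = u (real k * T + T/2)"
proof (rule has_real_derivative_zero_Icc_const[OF _ assms])
  fix s assume s: "s \<in> {real k * T + T/2..real k * T + T}"
  then have "\<alpha> s = 0"
    using alpha_shift[of "s - real k * T" k] alpha_vanishes[of "s - real k * T"] by simp
  moreover have "(u has_real_derivative \<alpha> s * u s * (1 - v s)) (at s within {real k * T + T/2..real k * T + T})"
    using ode_u_Icc[OF _ s] T_pos by simp
  ultimately show "(u has_real_derivative 0) (at s within {real k * T + T/2..real k * T + T})"
    by simp
qed

lemma u_after_first_half:
  "u (real k * T + T/2) = u (real k * T) * exp ((1 - v (real k * T)) * A)"
proof -
  let ?I = "{real k * T..real k * T + T/2}"
  have "u (real k * T + T/2) = u (real k * T) * exp ((1 - v (real k * T)) * integral ?I \<alpha>)"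
  proof (rule linear_ode_solution_Icc)
    show "continuous_on ?I \<alpha>"
      using alpha_cont continuous_on_subset by blast
    fix t assume t: "t \<in> ?I"
    have "(u has_real_derivative \<alpha> t * u t * (1 - v t)) (at t within ?I)"
      using ode_u_Icc[OF _ t] T_pos by simp
    then show "(u has_real_derivative \<alpha> t * u t * (1 - v (real k * T))) (at t within ?I)"
      by (simp only: v_frozen_first_half[OF t])
  qed (use T_pos in simp)
  moreover have "integral ?I \<alpha> = A"
    using integral_periodic_shift[of \<alpha> "real k * T" 0 "T/2"] alpha_shift integral_alpha_first_half
    by (simp add: add.commute)
  ultimately show ?thesis by simp
qed

lemma v_after_second_half:
  "v (real k * T + T) = v (real k * T + T/2) * exp ((u (real k * T + T/2) - 1) * A)"
proof -
  let ?I = "{real k * T + T/2..real k * T + T}"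
  have "v (real k * T + T) = v (real k * T + T/2) * exp ((u (real k * T + T/2) - 1) * integral ?I \<beta>)"
  proof (rule linear_ode_solution_Icc)
    show "continuous_on ?I \<beta>"
      using beta_cont continuous_on_subset by blast
    fix t assume t: "t \<in> ?I"
    have "(v has_real_derivative \<beta> t * v t * (u t - 1)) (at t within ?I)"
      using ode_v_Icc[OF _ t] T_pos by simp
    then show "(v has_real_derivative \<beta> t * v t * (u (real k * T + T/2) - 1)) (at t within ?I)"
      by (simp only: u_frozen_second_half[OF t])
  qed (use T_pos in simp)
  moreover have "integral ?I \<beta> = A"
    using integral_periodic_shift[of \<beta> "real k * T" "T/2" T] beta_shift integral_beta_second_half
    by (simp add: add.commute)
  ultimately show ?thesis by simp
qed

lemma period_map:
  "(u (real (Suc k) * T), v (real (Suc k) * T)) = poincare_step A (u (real k * T), v (real k * T))"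
proof -
  have "real (Suc k) * T = real k * T + T"
    by (simp add: algebra_simps)
  moreover have "u (real k * T + T) = u (real k * T + T/2)"
    using u_frozen_second_half T_pos by simp
  moreover have "v (real k * T + T/2) = v (real k * T)"
    using v_frozen_first_half T_pos by simp
  ultimately show ?thesis
    using u_after_first_half v_after_second_half by (simp add: poincare_step_def Let_def)
qed

sublocale sampled: poincare_orbit A "\<lambda>k. u (real k * T)" "\<lambda>k. v (real k * T)"
  by unfold_locales (rule period_map)

end

theorem lemma3p1:
  fixes T A x :: real and \<alpha> \<beta> u v :: "real \<Rightarrow> real" and n :: nat
  assumes T: "T > 0"
    and cont_a: "continuous_on UNIV \<alpha>" and cont_b: "continuous_on UNIV \<beta>"
    and per_a: "\<forall>t. \<alpha> (t + T) = \<alpha> t" and per_b: "\<forall>t. \<beta> (t + T) = \<beta> t"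
    and a0: "\<forall>t\<in>{T/2..T}. \<alpha> t = 0" and b0: "\<forall>t\<in>{0..T/2}. \<beta> t = 0"
    and apos: "\<forall>t\<in>{0<..<T/2}. \<alpha> t > 0" and bpos: "\<forall>t\<in>{T/2<..<T}. \<beta> t > 0"
    and intA: "integral {0..T} \<alpha> = A" and intB: "integral {0..T} \<beta> = A" and A: "A > 0"
    and x: "x > 0"
    and ode_u: "\<forall>t\<in>{0..}. (u has_real_derivative (\<alpha> t * u t * (1 - v t))) (at t within {0..})"
    and ode_v: "\<forall>t\<in>{0..}. (v has_real_derivative (\<beta> t * v t * (-1 + u t))) (at t within {0..})"
    and init: "u 0 = x" "v 0 = x"
    and n: "n \<ge> 2"
    and sum_u: "(\<Sum>k<n. u (real k * T)) = real n"
    and sum_v: "(\<Sum>k<n. v (real k * T)) = real n"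
  shows "\<forall>h\<in>{1..n-1}. u (real h * T) = v (real (n - h) * T)"
proof -
  interpret seasonal_predator_prey T A \<alpha> \<beta> u v
    using assms by unfold_locales auto
  have "u (real n * T) = x" "v (real n * T) = x"
    using sampled.returns_if_sums_eq[OF sum_u sum_v] init by simp_all
  then have "u (real (n - h) * T) = v (real h * T) \<and> v (real (n - h) * T) = u (real h * T)"
    if "h \<le> n" for h
    using sampled.reversed_orbit_swapped[OF _ that] init by simp
  then show ?thesis by auto
qed

end
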